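(* Let $d\ge1$ and let $\sigma$ be a finite positive measure on $\mathbb{R}^{2d}$ supported on a compact set $\Sigma\subset\mathbb{B}^{2d}(0,1)$. Let $\varphi$ be a Schwartz function on $\mathbb{R}^d$ and, for $k\in\mathbb{Z}$, let $P_{<k}f=f*\varphi_k$ with $\varphi_k(x)=2^{kd}\varphi(2^kx)$. For Schwartz functions $f_1,f_2$ on $\mathbb{R}^d$, $\mathrm{F}=(f_1,f_2)$, define \[ \mathfrak{A}_k^1(\mathrm{F})(x)=\sup_{1<t<2}\Big|\int_\Sigma P_{<k}f_1(x-2^{-k}ty_1)\,f_2(x-2^{-k}ty_2)\,\mathrm{d}\sigma(y_1,y_2)\Big| \] and $M_\sigma^2(f)(x)=\sup_{t>0}\int_\Sigma|f(x-ty_2)|\,\mathrm{d}\sigma(y_1,y_2)$. Then there is a constant $C$ independent of $k$, $x$ and $f_1,f_2$ such that \[ \mathfrak{A}_k^1(\mathrm{F})(x)\le C\,M_{HL}(f_1)(x)\,M_\sigma^2(f_2)(x)\qquad\text{for all }x\in\mathbb{R}^d,\ k\in\mathbb{Z}, \] where $M_{HL}$ is the Hardy–Littlewood maximal function.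
   Context: $\mathbb{B}^n(0,1)$ is the unit ball of $\mathbb{R}^n$. *)

theory Defs
  imports "HOL-Analysis.Analysis"
begin

definition pdiff :: "'n::finite \<Rightarrow> (real^'n \<Rightarrow> complex) \<Rightarrow> real^'n \<Rightarrow> complex" where
  "pdiff i f x = vector_derivative (\<lambda>t. f (x + t *\<^sub>R axis i 1)) (at 0)"

fun iter_pdiff :: "'n::finite list \<Rightarrow> (real^'n \<Rightarrow> complex) \<Rightarrow> real^'n \<Rightarrow> complex" where
  "iter_pdiff [] f = f"
| "iter_pdiff (i # is) f = pdiff i (iter_pdiff is f)"

definition schwartz :: "(real^'n::finite \<Rightarrow> complex) \<Rightarrow> bool" where
  "schwartz f \<longleftrightarrow> (\<forall>is. (\<forall>x. iter_pdiff is f differentiable (at x)) \<and>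
       (\<forall>N::nat. \<exists>B. \<forall>x. (1 + norm x) ^ N * norm (iter_pdiff is f x) \<le> B))"

definition dil :: "(real^'n::finite \<Rightarrow> complex) \<Rightarrow> int \<Rightarrow> real^'n \<Rightarrow> complex" where
  "dil \<phi> k x = of_real (2 powr (real_of_int k * real CARD('n))) * \<phi> ((2 powr real_of_int k) *\<^sub>R x)"

definition Pk :: "(real^'n::finite \<Rightarrow> complex) \<Rightarrow> int \<Rightarrow> (real^'n \<Rightarrow> complex) \<Rightarrow> real^'n \<Rightarrow> complex" where
  "Pk \<phi> k f x = (LINT y|lborel. f (x - y) * dil \<phi> k y)"

definition M_HL :: "(real^'n::finite \<Rightarrow> complex) \<Rightarrow> real^'n \<Rightarrow> ereal" where
  "M_HL f x = (SUP r\<in>{0<..}. ereal ((LINT y:ball x r|lborel. norm (f y)) / measure lborel (ball x r)))"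

definition M_sigma2 :: "((real^'n::finite) \<times> (real^'n)) measure \<Rightarrow> ((real^'n) \<times> (real^'n)) set
    \<Rightarrow> (real^'n \<Rightarrow> complex) \<Rightarrow> real^'n \<Rightarrow> ereal" where
  "M_sigma2 \<sigma> \<Sigma> f x = (SUP t\<in>{0<..}. ereal (LINT y:\<Sigma>|\<sigma>. norm (f (x - t *\<^sub>R snd y))))"

definition A1 :: "((real^'n::finite) \<times> (real^'n)) measure \<Rightarrow> ((real^'n) \<times> (real^'n)) set
    \<Rightarrow> (real^'n \<Rightarrow> complex) \<Rightarrow> int \<Rightarrow> (real^'n \<Rightarrow> complex) \<Rightarrow> (real^'n \<Rightarrow> complex) \<Rightarrow> real^'n \<Rightarrow> ereal" where
  "A1 \<sigma> \<Sigma> \<phi> k f1 f2 x = (SUP t\<in>{1<..<2}. ereal (norm (LINT y:\<Sigma>|\<sigma>.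
      Pk \<phi> k f1 (x - (2 powr (- real_of_int k) * t) *\<^sub>R fst y) *
      f2 (x - (2 powr (- real_of_int k) * t) *\<^sub>R snd y))))"

end

theory Submission
  imports Defs
begin

text \<open>Since \<Sigma> lies in the unit ball, for 1 < t < 2 the points x - 2^-k t y1 with
  (y1, y2) \<in> \<Sigma> all lie within 2^(1-k) of x. The decay of \<phi> dominates |\<phi>_k| by
  \<Sum>_j c 2^-j |B(0, 2^(j-k))|^-1 1_B(0, 2^(j-k)), and every ball around such a point lies in
  a ball around x of comparable radius; hence |P_<k f1| is at most a constant multiple of
  M_HL f1 (x) there. Pulling this bound out of the \<sigma>-integral leaves the average of
  |f2 (x - 2^-k t y2)|, which is at most M_\<sigma>^2 f2 (x).\<close>

lemma schwartz_continuous: "schwartz f \<Longrightarrow> continuous_on UNIV f"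
  unfolding schwartz_def
  by (metis iter_pdiff.simps(1) continuous_at_imp_continuous_on differentiable_imp_continuous_within)

lemma schwartz_decay: "schwartz f \<Longrightarrow> \<exists>B. \<forall>x. (1 + norm x) ^ N * norm (f x) \<le> B"
  unfolding schwartz_def by (metis iter_pdiff.simps(1))

lemma schwartz_bounded:
  assumes "schwartz f"
  obtains B where "\<And>x. norm (f x) \<le> B"
  using schwartz_decay[OF assms, of 0] by auto

lemma set_integrable_ball_norm:
  fixes f :: "'a::euclidean_space \<Rightarrow> 'b::real_normed_vector"
  assumes "continuous_on UNIV f"
  shows "set_integrable lborel (ball x R) (\<lambda>y. norm (f y))"
proof -
  have "integrable lborel (\<lambda>y. indicator (cball x R) y *\<^sub>R norm (f y))"
    using assms by (intro borel_integrable_compact) (auto intro!: continuous_intros elim: continuous_on_subset)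
  then show ?thesis
    unfolding set_integrable_def[symmetric] by (rule set_integrable_subset) auto
qed

lemma M_HL_nonneg: "0 \<le> M_HL f x"
  unfolding M_HL_def
  by (rule order_trans[OF _ SUP_upper[of 1]])
     (auto simp: set_lebesgue_integral_def intro!: divide_nonneg_nonneg integral_nonneg_AE)

lemma M_HL_le_bound:
  fixes f :: "real^'n::finite \<Rightarrow> complex"
  assumes f: "continuous_on UNIV f" and B: "\<And>y. norm (f y) \<le> B"
  shows "M_HL f x \<le> ereal B"
  unfolding M_HL_def
proof (rule SUP_least)
  fix r :: real assume "r \<in> {0<..}"
  then have vol: "measure lborel (ball x r) > 0" by (simp add: content_ball_pos)
  have "(LINT y:ball x r|lborel. norm (f y)) \<le> (LINT y:ball x r|lborel. B)"
    using B by (intro set_integral_mono set_integrable_ball_norm[OF f])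
      (auto simp: set_integrable_def intro!: integrable_real_indicator emeasure_lborel_ball_finite)
  also have "\<dots> = measure lborel (ball x r) * B"
    by (subst set_integral_const) (use emeasure_lborel_ball_finite[of x r] in auto)
  finally show "ereal ((LINT y:ball x r|lborel. norm (f y)) / measure lborel (ball x r)) \<le> ereal B"
    using vol by (simp add: divide_le_eq mult.commute)
qed

lemma schwartz_M_HL_finite:
  assumes "schwartz f"
  obtains h where "M_HL f x = ereal h"
proof -
  obtain B where "\<And>y. norm (f y) \<le> B" using schwartz_bounded[OF assms] by blast
  then have "M_HL f x \<le> ereal B" by (rule M_HL_le_bound[OF schwartz_continuous[OF assms]])
  with M_HL_nonneg[of f x] show ?thesis using that by (cases "M_HL f x") auto
qed

lemma set_nn_integral_ball_le_M_HL:
  fixes f :: "real^'n::finite \<Rightarrow> complex"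
  assumes f: "continuous_on UNIV f" and Mf: "M_HL f x \<le> ereal h" and "R > 0"
  shows "(\<integral>\<^sup>+y\<in>ball x R. norm (f y) \<partial>lborel) \<le> ennreal (h * unit_ball_vol CARD('n) * R ^ CARD('n))"
proof -
  have vol: "measure lborel (ball x R) = unit_ball_vol CARD('n) * R ^ CARD('n)"
    using \<open>R > 0\<close> content_ball[where c=x and r=R] by simp
  have "ereal ((LINT y:ball x R|lborel. norm (f y)) / measure lborel (ball x R)) \<le> M_HL f x"
    unfolding M_HL_def by (rule SUP_upper) (use \<open>R > 0\<close> in auto)
  also note Mf
  finally have "(LINT y:ball x R|lborel. norm (f y)) / measure lborel (ball x R) \<le> h"
    by simp
  then have avg: "(LINT y:ball x R|lborel. norm (f y)) \<le> h * measure lborel (ball x R)"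
    using \<open>R > 0\<close> by (simp add: pos_divide_le_eq content_ball_pos)
  have "(\<integral>\<^sup>+y\<in>ball x R. norm (f y) \<partial>lborel) = (\<integral>\<^sup>+y. indicator (ball x R) y *\<^sub>R norm (f y) \<partial>lborel)"
    by (intro nn_integral_cong) (simp add: indicator_def)
  also have "\<dots> = ennreal (LINT y:ball x R|lborel. norm (f y))"
    using set_integrable_ball_norm[OF f, of x R] unfolding set_integrable_def set_lebesgue_integral_def
    by (intro nn_integral_eq_integral) auto
  finally show ?thesis using avg by (simp add: vol mult.assoc ennreal_leI)
qed

lemma nn_integral_lborel_reflect:
  fixes g :: "'a::euclidean_space \<Rightarrow> ennreal"
  assumes "g \<in> borel_measurable borel"
  shows "(\<integral>\<^sup>+y. g (z - y) \<partial>lborel) = (\<integral>\<^sup>+w. g w \<partial>lborel)"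
proof -
  have "(lborel :: 'a measure) = distr lborel borel (\<lambda>x. z - x)"
    using lborel_affine[of "-1" z] by (simp add: density_1)
  then have "(\<integral>\<^sup>+w. g w \<partial>lborel) = (\<integral>\<^sup>+w. g w \<partial>distr lborel borel (\<lambda>x. z - x))"
    by simp
  also have "\<dots> = (\<integral>\<^sup>+y. g (z - y) \<partial>lborel)"
    using assms by (subst nn_integral_distr) auto
  finally show ?thesis ..
qed

lemma set_nn_integral_shifted_ball_le_M_HL:
  fixes f :: "real^'n::finite \<Rightarrow> complex"
  assumes f: "continuous_on UNIV f" and Mf: "M_HL f x \<le> ereal h"
    and z: "dist z x \<le> a" and "\<rho> > 0"
  shows "(\<integral>\<^sup>+y\<in>ball 0 \<rho>. norm (f (z - y)) \<partial>lborel)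
    \<le> ennreal (h * unit_ball_vol CARD('n) * (\<rho> + a) ^ CARD('n))"
proof -
  have [measurable]: "f \<in> borel_measurable borel"
    using f by (rule borel_measurable_continuous_onI)
  have ball_mono: "ball z \<rho> \<subseteq> ball x (\<rho> + a)"
    using z by (intro subsetI) (simp, metric)
  have "(\<integral>\<^sup>+y\<in>ball 0 \<rho>. norm (f (z - y)) \<partial>lborel) = (\<integral>\<^sup>+w\<in>ball z \<rho>. norm (f w) \<partial>lborel)"
    by (subst nn_integral_lborel_reflect[symmetric])
       (auto intro!: nn_integral_cong simp: indicator_def dist_norm)
  also have "\<dots> \<le> (\<integral>\<^sup>+w\<in>ball x (\<rho> + a). norm (f w) \<partial>lborel)"
    using ball_mono by (intro nn_integral_mono mult_left_mono) (auto split: split_indicator)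
  also have "\<dots> \<le> ennreal (h * unit_ball_vol CARD('n) * (\<rho> + a) ^ CARD('n))"
    using \<open>\<rho> > 0\<close> zero_le_dist[of z x] z
    by (intro set_nn_integral_ball_le_M_HL[OF f Mf]) linarith
  finally show ?thesis .
qed

lemma dyadic_scale_exists:
  fixes r s :: real
  assumes "r > 0"
  obtains j :: nat where "s < 2^j * r" and "j = 0 \<or> 2^(j - 1) * r \<le> s"
proof -
  obtain n :: nat where "s / r < 2^n" using real_arch_pow[of 2 "s / r"] by auto
  then have ex: "s < 2^n * r" using assms by (simp add: divide_less_eq)
  define j where "j = (LEAST n::nat. s < 2^n * r)"
  have "s < 2^j * r" unfolding j_def by (rule LeastI[of "\<lambda>n. s < 2^n * r", OF ex])
  moreover have "\<not> s < 2^(j - 1) * r" if "j > 0"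
    using that not_less_Least[of "j - 1" "\<lambda>n. s < 2^n * r"] unfolding j_def by simp
  ultimately show ?thesis using that by force
qed

lemma norm_dil_le_dyadic:
  fixes \<phi> :: "real^'n::finite \<Rightarrow> complex"
  defines "d \<equiv> CARD('n)"
  assumes decay: "\<And>y. (1 + norm y) ^ (d + 1) * norm (\<phi> y) \<le> B"
    and r: "r = 2 powr - real_of_int k"
    and y: "j = 0 \<or> 2^(j - 1) * r \<le> norm y"
  shows "norm (dil \<phi> k y) \<le> B * 2^(d + 1) / 2^((d + 1) * j) / r^d"
proof -
  define a where "a = 2 powr real_of_int k"
  have a: "a > 0" "a * r = 1"
    unfolding a_def r by (simp_all flip: powr_add)
  then have "r = 1 / a" by (simp add: eq_divide_eq mult.commute)
  have "B \<ge> 0" using decay[of 0] by simp (meson norm_ge_zero order_trans)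
  have norm_dil: "norm (dil \<phi> k y) = a^d * norm (\<phi> (a *\<^sub>R y))"
    unfolding dil_def a_def d_def
    by (simp add: norm_mult powr_realpow[symmetric] powr_powr mult.commute)
  have "2^j / 2 \<le> 1 + norm (a *\<^sub>R y)"
  proof (cases "j = 0")
    case False
    then have "2^j / 2 \<le> a * (2^(j - 1) * r)"
      using a by (simp add: power_eq_if mult.assoc[symmetric] mult.commute[of a])
    also have "\<dots> \<le> a * norm y" using y False a by simp
    finally show ?thesis using a by simp
  qed simp
  then have "(2^j / 2) ^ (d + 1) \<le> (1 + norm (a *\<^sub>R y)) ^ (d + 1)"
    by (intro power_mono) auto
  then have "B / (1 + norm (a *\<^sub>R y)) ^ (d + 1) \<le> B / (2^j / 2) ^ (d + 1)"
    using \<open>B \<ge> 0\<close> by (intro divide_left_mono mult_pos_pos zero_less_power add_pos_nonneg) auto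
  moreover have "norm (\<phi> (a *\<^sub>R y)) \<le> B / (1 + norm (a *\<^sub>R y)) ^ (d + 1)"
    using decay[of "a *\<^sub>R y"] by (subst pos_le_divide_eq) (auto simp: add_pos_nonneg mult.commute)
  ultimately have "norm (\<phi> (a *\<^sub>R y)) \<le> B / (2^j / 2) ^ (d + 1)"
    by linarith
  also have "\<dots> = B * 2^(d + 1) / 2^((d + 1) * j)"
    by (simp add: power_divide power_mult_distrib mult.commute flip: power_mult power_add)
  finally have "norm (\<phi> (a *\<^sub>R y)) \<le> B * 2^(d + 1) / 2^((d + 1) * j)" .
  moreover have "norm (dil \<phi> k y) = norm (\<phi> (a *\<^sub>R y)) / r^d"
    using \<open>r = 1 / a\<close> by (simp add: norm_dil power_one_over)
  ultimately show ?thesis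
    using \<open>r = 1 / a\<close> a by (metis divide_right_mono less_imp_le zero_less_divide_1_iff zero_less_power)
qed

lemma norm_dil_le_suminf_balls:
  fixes \<phi> :: "real^'n::finite \<Rightarrow> complex"
  defines "d \<equiv> CARD('n)"
  assumes decay: "\<And>y. (1 + norm y) ^ (d + 1) * norm (\<phi> y) \<le> B"
    and r: "r = 2 powr - real_of_int k"
  shows "ennreal (norm (dil \<phi> k y))
    \<le> (\<Sum>j. ennreal (B * 2^(d + 1) / 2^((d + 1) * j) / r^d) * indicator (ball 0 (2^j * r)) y)"
proof -
  obtain j where j: "norm y < 2^j * r" "j = 0 \<or> 2^(j - 1) * r \<le> norm y"
    using dyadic_scale_exists[of r] r by auto
  have term_le_suminf: "f j \<le> (\<Sum>i. f i)" for f :: "nat \<Rightarrow> ennreal"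
    using sum_le_suminf[OF summableI, of "{j}" f] by simp
  let ?w = "\<lambda>i. ennreal (B * 2^(d + 1) / 2^((d + 1) * i) / r^d) * indicator (ball 0 (2^i * r)) y"
  have "ennreal (norm (dil \<phi> k y)) \<le> ?w j"
    using norm_dil_le_dyadic[OF decay[unfolded d_def] r j(2)] j(1)
    by (simp add: d_def ennreal_leI)
  also have "\<dots> \<le> (\<Sum>i. ?w i)"
    by (rule term_le_suminf)
  finally show ?thesis .
qed

lemma suminf_ennreal_divide_power2: "c \<ge> 0 \<Longrightarrow> (\<Sum>j. ennreal (c / 2^j)) = ennreal (2 * c)"
proof -
  assume "c \<ge> 0"
  have "(\<lambda>j. c / 2^j) sums (2 * c)"
    using sums_mult[OF geometric_sums[of "1/2::real"], of c] by (simp add: power_one_over mult.commute)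
  then show ?thesis
    using \<open>c \<ge> 0\<close> by (simp add: suminf_ennreal2 sums_summable sums_unique[symmetric])
qed

lemma norm_integral_le_nn_integral:
  fixes f :: "'a \<Rightarrow> 'b::{banach, second_countable_topology}"
  shows "ennreal (norm (integral\<^sup>L M f)) \<le> (\<integral>\<^sup>+x. norm (f x) \<partial>M)"
  by (cases "integrable M f") (simp_all add: integral_norm_bound_ennreal not_integrable_integral_eq)

lemma dyadic_weight_times_ball_volume:
  fixes B h \<omega> r :: real and d j :: nat
  assumes "r > 0"
  shows "B * 2^(d + 1) / 2^((d + 1) * j) / r^d * (h * \<omega> * (4 * 2^j * r)^d) = 2^(3 * d + 1) * \<omega> * B * h / 2^j"
proof -
  have "(4 * 2^j * r :: real)^d = 2^(2 * d) * 2^(j * d) * r^d"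
    by (simp add: power_mult_distrib power_mult)
  moreover have "(2::real)^((d + 1) * j) = 2^(j * d) * 2^j"
    by (simp add: algebra_simps power_add)
  moreover have "(2::real)^(3 * d + 1) = 2^(d + 1) * 2^(2 * d)"
    by (simp flip: power_add)
  ultimately show ?thesis using assms by (simp add: field_simps)
qed

lemma dyadic_term_le_M_HL:
  fixes f :: "real^'n::finite \<Rightarrow> complex"
  defines "d \<equiv> CARD('n)"
  assumes f: "continuous_on UNIV f" and Mf: "M_HL f x \<le> ereal h"
    and z: "dist z x \<le> 2 * r" and "r > 0" and "B \<ge> 0"
  shows "ennreal (B * 2^(d + 1) / 2^((d + 1) * j) / r^d) * (\<integral>\<^sup>+y\<in>ball 0 (2^j * r). norm (f (z - y)) \<partial>lborel)
    \<le> ennreal (2^(3 * d + 1) * unit_ball_vol d * B * h / 2^j)"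
proof -
  define \<omega> where "\<omega> = unit_ball_vol d"
  define c where "c = B * 2^(d + 1) / 2^((d + 1) * j) / r^d"
  have "\<omega> > 0" "c \<ge> 0" using \<open>B \<ge> 0\<close> \<open>r > 0\<close> by (simp_all add: \<omega>_def c_def)
  have "h \<ge> 0" using order_trans[OF M_HL_nonneg Mf] by simp
  have "(2::real) \<le> 3 * 2^j" using one_le_power[of "2::real" j] by linarith
  then have radius: "2^j * r + 2 * r \<le> 4 * 2^j * r"
    using mult_right_mono[of 2 "3 * 2^j" r] \<open>r > 0\<close> by (simp add: algebra_simps)
  have "(\<integral>\<^sup>+y\<in>ball 0 (2^j * r). norm (f (z - y)) \<partial>lborel) \<le> ennreal (h * \<omega> * (2^j * r + 2 * r) ^ d)"
    unfolding \<omega>_def d_def using \<open>r > 0\<close> z by (intro set_nn_integral_shifted_ball_le_M_HL[OF f Mf]) simp_all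
  also have "\<dots> \<le> ennreal (h * \<omega> * (4 * 2^j * r) ^ d)"
    using radius \<open>r > 0\<close> \<open>h \<ge> 0\<close> \<open>\<omega> > 0\<close> by (intro ennreal_leI mult_left_mono power_mono) auto
  finally have "ennreal c * (\<integral>\<^sup>+y\<in>ball 0 (2^j * r). norm (f (z - y)) \<partial>lborel)
      \<le> ennreal (c * (h * \<omega> * (4 * 2^j * r) ^ d))"
    using \<open>c \<ge> 0\<close> \<open>h \<ge> 0\<close> \<open>\<omega> > 0\<close> \<open>r > 0\<close> by (subst ennreal_mult) (auto intro: mult_left_mono)
  also have "c * (h * \<omega> * (4 * 2^j * r) ^ d) = 2^(3 * d + 1) * \<omega> * B * h / 2^j"
    unfolding c_def using \<open>r > 0\<close> by (rule dyadic_weight_times_ball_volume)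
  finally show ?thesis unfolding c_def \<omega>_def .
qed

lemma norm_Pk_le_M_HL:
  fixes \<phi> f :: "real^'n::finite \<Rightarrow> complex"
  defines "d \<equiv> CARD('n)"
  assumes decay: "\<And>y. (1 + norm y) ^ (d + 1) * norm (\<phi> y) \<le> B"
    and f: "continuous_on UNIV f" and Mf: "M_HL f x \<le> ereal h"
    and z: "dist z x \<le> 2 * 2 powr - real_of_int k"
  shows "norm (Pk \<phi> k f z) \<le> 2^(3 * d + 2) * unit_ball_vol d * B * h"
proof -
  define r where "r = 2 powr - real_of_int k"
  define \<omega> where "\<omega> = unit_ball_vol d"
  define c where "c j = B * 2^(d + 1) / 2^((d + 1) * j) / r^d" for j :: nat
  define g where "g y = ennreal (norm (f (z - y)))" for y
  have "\<omega> > 0" by (simp add: \<omega>_def)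
  have "B \<ge> 0" using decay[of 0] by simp (meson norm_ge_zero order_trans)
  have "h \<ge> 0" using order_trans[OF M_HL_nonneg Mf] by simp
  have [measurable]: "f \<in> borel_measurable borel"
    using f by (rule borel_measurable_continuous_onI)
  have [measurable]: "g \<in> borel_measurable borel"
    unfolding g_def by measurable
  have [measurable]: "Measurable.pred borel (\<lambda>y. y \<in> ball 0 \<rho>)" for \<rho>
    by (simp del: mem_ball add: pred_def)
  have ball_term: "ennreal (c j) * (\<integral>\<^sup>+y\<in>ball 0 (2^j * r). g y \<partial>lborel)
      \<le> ennreal (2^(3 * d + 1) * \<omega> * B * h / 2^j)" for j
    unfolding c_def g_def \<omega>_def d_def using z \<open>B \<ge> 0\<close>
    by (intro dyadic_term_le_M_HL[OF f Mf]) (simp_all add: r_def)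
  have "ennreal (norm (Pk \<phi> k f z)) \<le> (\<integral>\<^sup>+y. g y * norm (dil \<phi> k y) \<partial>lborel)"
    unfolding Pk_def g_def
    by (rule order_trans[OF norm_integral_le_nn_integral]) (simp add: norm_mult ennreal_mult)
  also have "\<dots> \<le> (\<integral>\<^sup>+y. g y * (\<Sum>j. ennreal (c j) * indicator (ball 0 (2^j * r)) y) \<partial>lborel)"
    unfolding c_def using norm_dil_le_suminf_balls[OF decay[unfolded d_def] r_def]
    by (intro nn_integral_mono mult_left_mono) (simp_all add: d_def)
  also have "\<dots> = (\<integral>\<^sup>+y. (\<Sum>j. ennreal (c j) * (g y * indicator (ball 0 (2^j * r)) y)) \<partial>lborel)"
    by (simp add: mult_ac flip: ennreal_suminf_cmult)
  also have "\<dots> = (\<Sum>j. ennreal (c j) * (\<integral>\<^sup>+y\<in>ball 0 (2^j * r). g y \<partial>lborel))"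
    by (subst nn_integral_suminf, measurable) (intro suminf_cong nn_integral_cmult, measurable)
  also have "\<dots> \<le> (\<Sum>j. ennreal (2^(3 * d + 1) * \<omega> * B * h / 2^j))"
    by (intro suminf_le ball_term summableI)
  also have "\<dots> = ennreal (2^(3 * d + 2) * \<omega> * B * h)"
    using \<open>B \<ge> 0\<close> \<open>h \<ge> 0\<close> \<open>\<omega> > 0\<close> by (subst suminf_ennreal_divide_power2) simp_all
  finally show ?thesis
    using \<open>B \<ge> 0\<close> \<open>h \<ge> 0\<close> \<open>\<omega> > 0\<close> by (simp add: \<omega>_def ennreal_le_iff)
qed

lemma norm_set_integral_le_mult:
  fixes f :: "'a \<Rightarrow> 'b::{banach, second_countable_topology}"
  assumes g: "set_integrable M A g" and fg: "\<And>y. y \<in> A \<Longrightarrow> norm (f y) \<le> c * g y"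
  shows "norm (LINT y:A|M. f y) \<le> c * (LINT y:A|M. g y)"
proof -
  have nonneg: "0 \<le> indicator A y * (c * g y)" for y
    by (auto intro: order_trans[OF norm_ge_zero fg] split: split_indicator)
  have eq: "c * (LINT y:A|M. g y) = (\<integral>y. indicator A y * (c * g y) \<partial>M)"
    by (simp add: set_lebesgue_integral_def mult_ac)
  have "ennreal (norm (LINT y:A|M. f y)) \<le> (\<integral>\<^sup>+y. norm (indicator A y *\<^sub>R f y) \<partial>M)"
    unfolding set_lebesgue_integral_def by (rule norm_integral_le_nn_integral)
  also have "\<dots> \<le> (\<integral>\<^sup>+y. indicator A y * (c * g y) \<partial>M)"
    using fg by (intro nn_integral_mono) (auto intro: ennreal_leI split: split_indicator)
  also have "\<dots> = ennreal (c * (LINT y:A|M. g y))"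
    unfolding eq using g nonneg unfolding set_integrable_def
    by (intro nn_integral_eq_integral) (auto simp: mult.left_commute)
  finally show ?thesis
    using nonneg by (simp add: eq integral_nonneg_AE)
qed

lemma set_integrable_bounded_continuous:
  fixes g :: "'a::topological_space \<Rightarrow> real"
  assumes "finite_measure M" "sets M = sets borel" "A \<in> sets borel"
    and "continuous_on UNIV g" "\<And>y. norm (g y) \<le> B"
  shows "set_integrable M A g"
proof -
  interpret finite_measure M by fact
  have "g \<in> borel_measurable M"
    unfolding measurable_cong_sets[OF assms(2) refl]
    using assms(4) by (rule borel_measurable_continuous_onI)
  then show ?thesis
    unfolding set_integrable_def using assms(2,3,5) order_trans[OF norm_ge_zero assms(5)]
    by (intro integrable_const_bound[where B=B]) (auto split: split_indicator)
qed

lemma A1_le_M_sigma2: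
  fixes \<sigma> :: "((real^'n::finite) \<times> (real^'n)) measure"
  assumes \<sigma>: "sets \<sigma> = sets borel" "finite_measure \<sigma>"
    and \<Sigma>: "\<Sigma> \<in> sets borel" "\<Sigma> \<subseteq> ball 0 1"
    and f2: "continuous_on UNIV f2" "\<And>w. norm (f2 w) \<le> B"
    and Pk: "\<And>z. dist z x \<le> 2 * 2 powr - real_of_int k \<Longrightarrow> norm (Pk \<phi> k f1 z) \<le> c"
  shows "A1 \<sigma> \<Sigma> \<phi> k f1 f2 x \<le> ereal c * M_sigma2 \<sigma> \<Sigma> f2 x"
  unfolding A1_def
proof (rule SUP_least)
  fix t :: real assume t: "t \<in> {1<..<2}"
  define s where "s = 2 powr - real_of_int k * t"
  have "s > 0" using t by (simp add: s_def)
  have "c \<ge> 0" using Pk[of x] by (simp add: order_trans[OF norm_ge_zero])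
  have near: "dist (x - s *\<^sub>R fst y) x \<le> 2 * 2 powr - real_of_int k" if "y \<in> \<Sigma>" for y
  proof -
    have "norm (fst y) \<le> 1"
      using that \<Sigma>(2) norm_fst_le[of "fst y" "snd y"] by (auto simp: dist_norm)
    then have "s * norm (fst y) \<le> s" using \<open>s > 0\<close> by (simp add: mult_left_le)
    also have "s \<le> 2 * 2 powr - real_of_int k" using t by (simp add: s_def)
    finally show ?thesis using \<open>s > 0\<close> by (simp add: dist_norm)
  qed
  have "set_integrable \<sigma> \<Sigma> (\<lambda>y. norm (f2 (x - s *\<^sub>R snd y)))"
    using f2 by (intro set_integrable_bounded_continuous[OF \<sigma>(2,1) \<Sigma>(1)] continuous_on_norm
        continuous_on_compose2[OF f2(1)] continuous_intros) auto
  then have "norm (LINT y:\<Sigma>|\<sigma>. Pk \<phi> k f1 (x - s *\<^sub>R fst y) * f2 (x - s *\<^sub>R snd y))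
      \<le> c * (LINT y:\<Sigma>|\<sigma>. norm (f2 (x - s *\<^sub>R snd y)))"
  proof (rule norm_set_integral_le_mult)
    fix y assume "y \<in> \<Sigma>"
    then have "norm (Pk \<phi> k f1 (x - s *\<^sub>R fst y)) \<le> c" by (intro Pk near)
    then show "norm (Pk \<phi> k f1 (x - s *\<^sub>R fst y) * f2 (x - s *\<^sub>R snd y))
        \<le> c * norm (f2 (x - s *\<^sub>R snd y))"
      unfolding norm_mult by (rule mult_right_mono) simp
  qed
  then have "ereal (norm (LINT y:\<Sigma>|\<sigma>. Pk \<phi> k f1 (x - s *\<^sub>R fst y) * f2 (x - s *\<^sub>R snd y)))
      \<le> ereal c * ereal (LINT y:\<Sigma>|\<sigma>. norm (f2 (x - s *\<^sub>R snd y)))"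
    by simp
  also have "\<dots> \<le> ereal c * M_sigma2 \<sigma> \<Sigma> f2 x"
    unfolding M_sigma2_def using \<open>s > 0\<close> \<open>c \<ge> 0\<close> by (intro ereal_mult_left_mono SUP_upper) auto
  finally show "ereal (norm (LINT y:\<Sigma>|\<sigma>. Pk \<phi> k f1 (x - s *\<^sub>R fst y) * f2 (x - s *\<^sub>R snd y)))
      \<le> ereal c * M_sigma2 \<sigma> \<Sigma> f2 x" .
qed

theorem lemma4p1:
  fixes \<sigma> :: "((real^'n::finite) \<times> (real^'n)) measure"
    and \<Sigma> :: "((real^'n) \<times> (real^'n)) set"
    and \<phi> :: "real^'n \<Rightarrow> complex"
  assumes "sets \<sigma> = sets borel"
    and "finite_measure \<sigma>"
    and "compact \<Sigma>"
    and "\<Sigma> \<subseteq> ball 0 1"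
    and "emeasure \<sigma> (UNIV - \<Sigma>) = 0"
    and "schwartz \<phi>"
  shows "\<exists>C::real. \<forall>(k::int) (x::real^'n) f1 f2. schwartz f1 \<longrightarrow> schwartz f2 \<longrightarrow>
           A1 \<sigma> \<Sigma> \<phi> k f1 f2 x \<le> ereal C * M_HL f1 x * M_sigma2 \<sigma> \<Sigma> f2 x"
proof -
  obtain B where decay: "\<And>y. (1 + norm y) ^ (CARD('n) + 1) * norm (\<phi> y) \<le> B"
    using schwartz_decay[OF assms(6)] by blast
  define C where "C = 2^(3 * CARD('n) + 2) * unit_ball_vol CARD('n) * B"
  have \<Sigma>: "\<Sigma> \<in> sets borel" using assms(3) by (simp add: compact_imp_closed)
  show ?thesis
  proof (intro exI[of _ C] allI impI)
    fix k x and f1 f2 :: "real^'n \<Rightarrow> complex"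
    assume f1: "schwartz f1" and f2: "schwartz f2"
    obtain h where h: "M_HL f1 x = ereal h" using schwartz_M_HL_finite[OF f1] .
    obtain B2 where B2: "\<And>w. norm (f2 w) \<le> B2" using schwartz_bounded[OF f2] by blast
    have "A1 \<sigma> \<Sigma> \<phi> k f1 f2 x \<le> ereal (C * h) * M_sigma2 \<sigma> \<Sigma> f2 x"
    proof (rule A1_le_M_sigma2[OF assms(1,2) \<Sigma> assms(4) schwartz_continuous[OF f2] B2])
      fix z assume z: "dist z x \<le> 2 * 2 powr - real_of_int k"
      show "norm (Pk \<phi> k f1 z) \<le> C * h"
        unfolding C_def by (rule norm_Pk_le_M_HL[OF decay schwartz_continuous[OF f1] _ z]) (simp add: h)
    qed
    then show "A1 \<sigma> \<Sigma> \<phi> k f1 f2 x \<le> ereal C * M_HL f1 x * M_sigma2 \<sigma> \<Sigma> f2 x"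
      by (simp add: h)
  qed
qed

end
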